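(* Let $T\in\mathbb R$ and let $f\ge0$, $g>0$, $h>0$ be continuous functions on $(T,\infty)$ with $h$ differentiable, and set $y(t)=h(t)\int_T^te^{-\int_\tau^tg(\theta)d\theta}f(\tau)d\tau$ for $t>T$. Assume $\int_T^\infty g(t)dt=\infty$ and $\lim_{t\to\infty}\frac{h'(t)}{h(t)g(t)}=0$. Then $$\limsup_{t\to\infty}y(t)\le\limsup_{t\to\infty}\frac{h(t)f(t)}{g(t)}.$$ *)

theory Defs
  imports "HOL-Analysis.Analysis"
begin

end

theory Submission
  imports Defs
begin

(*
  Fix 0 < eps < 1, a number c above the right-hand limsup, and t0 beyond which h f / g <= c and
  h' / (h g) <= eps. Writing G(s,t) for the integral of g over [s,t], Gronwall's inequality turns
  the second bound into h(t) <= h(s) exp (eps G(s,t)). Hence on (t0,t) the integrand of y(t), including the factor h(t),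
  is at most c g(s) exp (-(1 - eps) G(s,t)), an exact derivative whose integral is at most
  c / (1 - eps), while the part over (T,t0] is a constant times h(t) exp (-G(t0,t)), which is at most
  h(t0) exp (-(1 - eps) G(t0,t)) and tends to 0 because G(t0,t) diverges. So the limsup of y is at
  most c / (1 - eps) for all such c and eps.
*)

lemma integral_has_real_derivative_at:
  fixes g :: "real \<Rightarrow> real"
  assumes "continuous_on {a..} g" and "a < s"
  shows "((\<lambda>x. integral {a..x} g) has_real_derivative g s) (at s)"
proof -
  have "continuous_on {a..s+1} g"
    using assms(1) by (rule continuous_on_subset) auto
  then have "((\<lambda>x. integral {a..x} g) has_real_derivative g s) (at s within {a..s+1})"
    by (rule integral_has_real_derivative) (use assms(2) in auto)
  moreover have "s \<in> interior {a..s+1}"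
    using assms(2) by simp
  ultimately show ?thesis
    using at_within_interior by metis
qed

lemma gronwall_exp_bound:
  fixes h h' G G' :: "real \<Rightarrow> real"
  assumes "a \<le> b"
    and h_pos: "\<And>x. a \<le> x \<Longrightarrow> x \<le> b \<Longrightarrow> 0 < h x"
    and h_deriv: "\<And>x. a \<le> x \<Longrightarrow> x \<le> b \<Longrightarrow> (h has_real_derivative h' x) (at x)"
    and G_deriv: "\<And>x. a \<le> x \<Longrightarrow> x \<le> b \<Longrightarrow> (G has_real_derivative G' x) (at x)"
    and growth: "\<And>x. a \<le> x \<Longrightarrow> x \<le> b \<Longrightarrow> h' x \<le> \<epsilon> * G' x * h x"
  shows "h b \<le> h a * exp (\<epsilon> * (G b - G a))"
proof -
  have "ln (h b) - \<epsilon> * G b \<le> ln (h a) - \<epsilon> * G a"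
  proof (rule DERIV_nonpos_imp_nonincreasing[OF \<open>a \<le> b\<close>])
    fix x assume x: "a \<le> x" "x \<le> b"
    have "((\<lambda>x. ln (h x) - \<epsilon> * G x) has_real_derivative h' x / h x - \<epsilon> * G' x) (at x)"
      using h_deriv[OF x] G_deriv[OF x] h_pos[OF x] by (auto intro!: derivative_eq_intros)
    moreover have "h' x / h x - \<epsilon> * G' x \<le> 0"
      using growth[OF x] h_pos[OF x] by (simp add: divide_le_eq)
    ultimately show "\<exists>y. ((\<lambda>x. ln (h x) - \<epsilon> * G x) has_real_derivative y) (at x) \<and> y \<le> 0"
      by blast
  qed
  then have "exp (ln (h b)) \<le> exp (ln (h a) + \<epsilon> * (G b - G a))"
    by (simp add: algebra_simps)
  then show ?thesis
    using h_pos[of a] h_pos[of b] \<open>a \<le> b\<close> by (simp add: exp_add)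
qed

lemma set_integral_exp_integral_mult:
  fixes g :: "real \<Rightarrow> real"
  assumes g: "continuous_on {a..b} g" and "a \<le> b" and "k \<noteq> 0"
  shows "set_integrable lborel {a<..<b} (\<lambda>x. exp (- k * integral {x..b} g) * g x)"
    and "(LBINT x:{a<..<b}. exp (- k * integral {x..b} g) * g x)
           = (1 - exp (- k * integral {a..b} g)) / k"
proof -
  let ?E = "\<lambda>x. exp (- k * integral {x..b} g) * g x"
  have "continuous_on {a..b} (\<lambda>x. integral {x..b} g)"
    by (rule indefinite_integral_continuous_1'[OF integrable_continuous_real[OF g]])
  then have E_cont: "continuous_on {a..b} ?E"
    using g by (intro continuous_intros)
  show "set_integrable lborel {a<..<b} ?E"
    using interval_integrable_continuous_on[OF \<open>a \<le> b\<close> E_cont]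
    by (simp add: interval_lebesgue_integrable_def \<open>a \<le> b\<close>)
  have "(LBINT x=a..b. ?E x) = exp (- k * integral {b..b} g) / k - exp (- k * integral {a..b} g) / k"
  proof (rule interval_integral_FTC_finite)
    show "continuous_on {min a b..max a b} ?E"
      using E_cont \<open>a \<le> b\<close> by simp
    fix x assume "min a b \<le> x" "x \<le> max a b"
    then have x: "x \<in> {a..b}"
      using \<open>a \<le> b\<close> by simp
    have "((\<lambda>x. exp (- k * integral {x..b} g) / k) has_real_derivative ?E x) (at x within {a..b})"
      using integral_has_real_derivative'[OF g x] \<open>k \<noteq> 0\<close>
      by (auto intro!: derivative_eq_intros)
    then show "((\<lambda>x. exp (- k * integral {x..b} g) / k) has_vector_derivative ?E x)
        (at x within {min a b..max a b})"
      using \<open>a \<le> b\<close> by (simp add: has_real_derivative_iff_has_vector_derivative)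
  qed
  then show "(LBINT x:{a<..<b}. ?E x) = (1 - exp (- k * integral {a..b} g)) / k"
    using \<open>a \<le> b\<close> by (simp add: interval_lebesgue_integral_def diff_divide_distrib)
qed

lemma integral_combine_continuous_on:
  fixes g :: "real \<Rightarrow> real"
  assumes "continuous_on {T<..} g" and "T < u" "u \<le> v" "v \<le> w"
  shows "integral {u..w} g = integral {u..v} g + integral {v..w} g"
proof -
  have "continuous_on {u..w} g"
    using assms(1) by (rule continuous_on_subset) (use assms in auto)
  then have "integral {u..v} g + integral {v..w} g = integral {u..w} g"
    by (intro Henstock_Kurzweil_Integration.integral_combine integrable_continuous_real assms)
  then show ?thesis
    by simp
qed

lemma growth_bound_by_exp_integral:
  fixes g h :: "real \<Rightarrow> real"
  assumes g_cont: "continuous_on {T<..} g" and g_pos: "\<And>t. t > T \<Longrightarrow> g t > 0"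
    and h_pos: "\<And>t. t > T \<Longrightarrow> h t > 0"
    and h_diff: "\<And>t. t > T \<Longrightarrow> h differentiable (at t)"
    and ratio: "\<And>t. t \<ge> t0 \<Longrightarrow> deriv h t / (h t * g t) \<le> \<epsilon>"
    and "T < \<tau>" "t0 \<le> \<tau>" "\<tau> \<le> t"
  shows "h t \<le> h \<tau> * exp (\<epsilon> * integral {\<tau>..t} g)"
proof -
  \<comment> \<open>a base point below \<open>\<tau>\<close> makes the antiderivative of g two-sided differentiable on [\<tau>, t]\<close>
  define s where "s = (T + \<tau>) / 2"
  have s: "T < s" "s < \<tau>"
    using \<open>T < \<tau>\<close> by (auto simp: s_def)
  have "h t \<le> h \<tau> * exp (\<epsilon> * (integral {s..t} g - integral {s..\<tau>} g))"
  proof (rule gronwall_exp_bound[where h' = "deriv h" and G' = g])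
    fix x assume x: "\<tau> \<le> x" "x \<le> t"
    then have "x > T" "x \<ge> t0"
      using \<open>T < \<tau>\<close> \<open>t0 \<le> \<tau>\<close> by auto
    then show "0 < h x" "(h has_real_derivative deriv h x) (at x)"
      and "deriv h x \<le> \<epsilon> * g x * h x"
      using h_pos h_diff ratio[of x] g_pos[of x]
      by (auto simp: DERIV_deriv_iff_real_differentiable divide_le_eq mult_ac)
    show "((\<lambda>x. integral {s..x} g) has_real_derivative g x) (at x)"
      using g_cont s x by (intro integral_has_real_derivative_at)
        (auto elim: continuous_on_subset)
  qed fact
  then show ?thesis
    using integral_combine_continuous_on[OF g_cont, of s \<tau> t] s \<open>\<tau> \<le> t\<close> by simp
qed

lemma tail_integral_le:
  fixes f g h :: "real \<Rightarrow> real"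
  assumes g_cont: "continuous_on {T<..} g" and g_pos: "\<And>t. t > T \<Longrightarrow> g t > 0"
    and h_pos: "\<And>t. t > T \<Longrightarrow> h t > 0"
    and h_diff: "\<And>t. t > T \<Longrightarrow> h differentiable (at t)"
    and bound: "\<And>t. t \<ge> t0 \<Longrightarrow> h t * f t / g t \<le> c"
    and ratio: "\<And>t. t \<ge> t0 \<Longrightarrow> deriv h t / (h t * g t) \<le> \<epsilon>"
    and "\<epsilon> < 1" "0 \<le> c" "T < t0" "t0 \<le> t"
    and integrable: "set_integrable lborel {t0<..<t} (\<lambda>\<tau>. exp (- integral {\<tau>..t} g) * f \<tau>)"
  shows "h t * (LBINT \<tau>:{t0<..<t}. exp (- integral {\<tau>..t} g) * f \<tau>) \<le> c / (1 - \<epsilon>)"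
proof -
  let ?E = "\<lambda>\<tau>. exp (- (1 - \<epsilon>) * integral {\<tau>..t} g) * g \<tau>"
  have g_cont': "continuous_on {t0..t} g"
    using g_cont by (rule continuous_on_subset) (use \<open>T < t0\<close> in auto)
  have pointwise: "h t * (exp (- integral {\<tau>..t} g) * f \<tau>) \<le> c * ?E \<tau>"
    if "\<tau> \<in> {t0<..<t}" for \<tau>
  proof -
    define I where "I = integral {\<tau>..t} g"
    have \<tau>: "T < \<tau>" "t0 \<le> \<tau>" "\<tau> \<le> t"
      using that \<open>T < t0\<close> by auto
    have "h t * f \<tau> \<le> h t * (c * g \<tau> / h \<tau>)"
      using bound[OF \<tau>(2)] h_pos[of t] h_pos[OF \<tau>(1)] g_pos[OF \<tau>(1)] \<tau>
      by (intro mult_left_mono) (auto simp: field_simps)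
    also have "\<dots> \<le> h \<tau> * exp (\<epsilon> * I) * (c * g \<tau> / h \<tau>)"
      using growth_bound_by_exp_integral[OF g_cont g_pos h_pos h_diff ratio \<tau>]
        \<open>0 \<le> c\<close> g_pos[OF \<tau>(1)] h_pos[OF \<tau>(1)]
      by (intro mult_right_mono) (auto simp: I_def)
    also have "\<dots> = c * exp (\<epsilon> * I) * g \<tau>"
      using h_pos[OF \<tau>(1)] by simp
    finally have "exp (- I) * (h t * f \<tau>) \<le> exp (- I) * (c * exp (\<epsilon> * I) * g \<tau>)"
      by simp
    also have "\<dots> = c * ?E \<tau>"
      by (simp add: I_def mult_exp_exp algebra_simps)
    finally show ?thesis
      by (simp add: I_def mult_ac)
  qed
  have "h t * (LBINT \<tau>:{t0<..<t}. exp (- integral {\<tau>..t} g) * f \<tau>)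
      = (LBINT \<tau>:{t0<..<t}. h t * (exp (- integral {\<tau>..t} g) * f \<tau>))"
    by simp
  also have "\<dots> \<le> (LBINT \<tau>:{t0<..<t}. c * ?E \<tau>)"
    using set_integral_exp_integral_mult(1)[OF g_cont' \<open>t0 \<le> t\<close>, of "1 - \<epsilon>"] \<open>\<epsilon> < 1\<close>
    by (intro set_integral_mono set_integrable_mult_right integrable pointwise) auto
  also have "\<dots> = c * ((1 - exp (- (1 - \<epsilon>) * integral {t0..t} g)) / (1 - \<epsilon>))"
    using set_integral_exp_integral_mult(2)[OF g_cont' \<open>t0 \<le> t\<close>, of "1 - \<epsilon>"] \<open>\<epsilon> < 1\<close>
    by simp
  also have "\<dots> \<le> c * (1 / (1 - \<epsilon>))"
    using \<open>0 \<le> c\<close> \<open>\<epsilon> < 1\<close> by (intro mult_left_mono divide_right_mono) auto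
  finally show ?thesis
    by simp
qed

lemma kernel_integral_split:
  fixes f g :: "real \<Rightarrow> real"
  assumes g_cont: "continuous_on {T<..} g" and "T < t0" "t0 < t"
    and integrable: "set_integrable lborel {T<..<t} (\<lambda>\<tau>. exp (- integral {\<tau>..t} g) * f \<tau>)"
  shows "(LBINT \<tau>:{T<..<t}. exp (- integral {\<tau>..t} g) * f \<tau>)
       = exp (- integral {t0..t} g) * (LBINT \<tau>:{T<..t0}. exp (- integral {\<tau>..t0} g) * f \<tau>)
         + (LBINT \<tau>:{t0<..<t}. exp (- integral {\<tau>..t} g) * f \<tau>)"
proof -
  let ?F = "\<lambda>\<tau>. exp (- integral {\<tau>..t} g) * f \<tau>"
  have "{T<..<t} = {T<..t0} \<union> {t0<..<t}"
    using assms by auto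
  then have "(LBINT \<tau>:{T<..<t}. ?F \<tau>) = (LBINT \<tau>:{T<..t0}. ?F \<tau>) + (LBINT \<tau>:{t0<..<t}. ?F \<tau>)"
    by (simp only:) (intro set_integral_Un set_integrable_subset[OF integrable], use assms in auto)
  moreover have "(LBINT \<tau>:{T<..t0}. ?F \<tau>)
      = (LBINT \<tau>:{T<..t0}. exp (- integral {t0..t} g) * (exp (- integral {\<tau>..t0} g) * f \<tau>))"
  proof (intro set_lebesgue_integral_cong allI impI)
    fix \<tau> assume "\<tau> \<in> {T<..t0}"
    then have "integral {\<tau>..t} g = integral {\<tau>..t0} g + integral {t0..t} g"
      using integral_combine_continuous_on[OF g_cont, of \<tau> t0 t] assms by auto
    then show "?F \<tau> = exp (- integral {t0..t} g) * (exp (- integral {\<tau>..t0} g) * f \<tau>)"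
      by (simp add: mult_exp_exp)
  qed simp
  ultimately show ?thesis
    by simp
qed

lemma Limsup_le_of_eventual_bounds:
  fixes T :: real and f g h :: "real \<Rightarrow> real"
  assumes f_nonneg: "\<And>t. t > T \<Longrightarrow> f t \<ge> 0"
    and g_cont: "continuous_on {T<..} g" and g_pos: "\<And>t. t > T \<Longrightarrow> g t > 0"
    and h_pos: "\<And>t. t > T \<Longrightarrow> h t > 0"
    and h_diff: "\<And>t. t > T \<Longrightarrow> h differentiable (at t)"
    and y_integrable: "\<And>t. t > T \<Longrightarrow>
        set_integrable lborel {T<..<t} (\<lambda>\<tau>. exp (- integral {\<tau>..t} g) * f \<tau>)"
    and g_div: "\<And>s. s > T \<Longrightarrow> filterlim (\<lambda>t. integral {s..t} g) at_top at_top"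
    and bound: "\<And>t. t \<ge> t0 \<Longrightarrow> h t * f t / g t \<le> c"
    and ratio: "\<And>t. t \<ge> t0 \<Longrightarrow> deriv h t / (h t * g t) \<le> \<epsilon>"
    and "\<epsilon> < 1" "0 \<le> c" "T < t0"
  shows "Limsup at_top (\<lambda>t. ereal (h t * (LBINT \<tau>:{T<..<t}. exp (- integral {\<tau>..t} g) * f \<tau>)))
         \<le> ereal (c / (1 - \<epsilon>))"
proof -
  define C where "C = (LBINT \<tau>:{T<..t0}. exp (- integral {\<tau>..t0} g) * f \<tau>)"
  define r where "r t = h t0 * C * exp (- (1 - \<epsilon>) * integral {t0..t} g)" for t
  have "C \<ge> 0"
    unfolding C_def set_lebesgue_integral_def
    using f_nonneg by (intro Bochner_Integration.integral_nonneg) (auto simp: indicator_def)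
  have y_bound: "h t * (LBINT \<tau>:{T<..<t}. exp (- integral {\<tau>..t} g) * f \<tau>) \<le> c / (1 - \<epsilon>) + r t"
    if "t > t0" for t
  proof -
    have "h t * exp (- integral {t0..t} g) \<le> h t0 * exp (\<epsilon> * integral {t0..t} g) * exp (- integral {t0..t} g)"
      using growth_bound_by_exp_integral[OF g_cont g_pos h_pos h_diff ratio \<open>T < t0\<close> order.refl, of t] that
      by (intro mult_right_mono) auto
    also have "\<dots> = h t0 * exp (- (1 - \<epsilon>) * integral {t0..t} g)"
      by (simp add: mult.assoc mult_exp_exp algebra_simps)
    finally have "h t * exp (- integral {t0..t} g) * C \<le> h t0 * exp (- (1 - \<epsilon>) * integral {t0..t} g) * C"
      using \<open>C \<ge> 0\<close> by (rule mult_right_mono)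
    then have "h t * exp (- integral {t0..t} g) * C \<le> r t"
      unfolding r_def by (simp only: mult_ac)
    moreover have integrable: "set_integrable lborel {T<..<t} (\<lambda>\<tau>. exp (- integral {\<tau>..t} g) * f \<tau>)"
      using y_integrable that \<open>T < t0\<close> by simp
    have "h t * (LBINT \<tau>:{t0<..<t}. exp (- integral {\<tau>..t} g) * f \<tau>) \<le> c / (1 - \<epsilon>)"
      using that \<open>T < t0\<close>
      by (intro tail_integral_le[OF g_cont g_pos h_pos h_diff bound ratio \<open>\<epsilon> < 1\<close> \<open>0 \<le> c\<close>]
          set_integrable_subset[OF integrable]) auto
    ultimately show ?thesis
      unfolding kernel_integral_split[OF g_cont \<open>T < t0\<close> that integrable, folded C_def] distrib_left
      by (simp add: mult.assoc)
  qed
  have eventually_le: "\<forall>\<^sub>F t in at_top.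
      ereal (h t * (LBINT \<tau>:{T<..<t}. exp (- integral {\<tau>..t} g) * f \<tau>)) \<le> ereal (c / (1 - \<epsilon>) + r t)"
    using eventually_gt_at_top[of t0] by eventually_elim (simp add: y_bound)
  have "filterlim (\<lambda>t. (1 - \<epsilon>) * integral {t0..t} g) at_top at_top"
    by (rule filterlim_tendsto_pos_mult_at_top[OF tendsto_const _ g_div[OF \<open>T < t0\<close>]])
      (use \<open>\<epsilon> < 1\<close> in simp)
  then have "filterlim (\<lambda>t. - ((1 - \<epsilon>) * integral {t0..t} g)) at_bot at_top"
    by (simp add: filterlim_uminus_at_bot)
  then have "((\<lambda>t. exp (- ((1 - \<epsilon>) * integral {t0..t} g))) \<longlongrightarrow> 0) at_top"
    by (rule filterlim_compose[OF exp_at_bot])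
  then have "(r \<longlongrightarrow> 0) at_top"
    unfolding r_def mult_minus_left by (rule tendsto_mult_right_zero)
  then have "Limsup at_top (\<lambda>t. ereal (c / (1 - \<epsilon>) + r t)) = ereal (c / (1 - \<epsilon>))"
    by (intro lim_imp_Limsup) (auto simp: lim_ereal intro!: tendsto_eq_intros)
  then show ?thesis
    using Limsup_mono[OF eventually_le] by simp
qed

lemma ereal_le_of_scaled_bounds:
  fixes X L :: ereal
  assumes "0 \<le> L"
    and bounds: "\<And>c \<epsilon>. L < ereal c \<Longrightarrow> 0 < \<epsilon> \<Longrightarrow> \<epsilon> < 1 \<Longrightarrow> X \<le> ereal (c / (1 - \<epsilon>))"
  shows "X \<le> L"
proof (cases L)
  case (real l)
  show ?thesis
  proof (rule ereal_le_epsilon2)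
    fix \<delta> :: real assume "0 < \<delta>"
    define \<epsilon> where "\<epsilon> = \<delta> / (2 * (l + \<delta>))"
    have "l \<ge> 0"
      using \<open>0 \<le> L\<close> real by simp
    then have "0 < \<epsilon>" "\<epsilon> < 1" and "(l + \<delta> / 2) / (1 - \<epsilon>) = l + \<delta>"
      using \<open>0 < \<delta>\<close> by (auto simp: \<epsilon>_def field_simps)
    then show "X \<le> L + ereal \<delta>"
      using bounds[of "l + \<delta> / 2" \<epsilon>] real \<open>0 < \<delta>\<close> by simp
  qed
qed (use assms(1) in auto)

theorem lemmaA3:
  fixes T :: real and f g h :: "real \<Rightarrow> real"
  assumes f_cont: "continuous_on {T<..} f" and f_nonneg: "\<And>t. t > T \<Longrightarrow> f t \<ge> 0"
    and g_cont: "continuous_on {T<..} g" and g_pos: "\<And>t. t > T \<Longrightarrow> g t > 0"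
    and h_cont: "continuous_on {T<..} h" and h_pos: "\<And>t. t > T \<Longrightarrow> h t > 0"
    and h_diff: "\<And>t. t > T \<Longrightarrow> h differentiable (at t)"
    and y_integrable: "\<And>t. t > T \<Longrightarrow>
        set_integrable lborel {T<..<t} (\<lambda>\<tau>. exp (- integral {\<tau>..t} g) * f \<tau>)"
    and g_div: "\<And>s. s > T \<Longrightarrow> filterlim (\<lambda>t. integral {s..t} g) at_top at_top"
    and lim: "((\<lambda>t. deriv h t / (h t * g t)) \<longlongrightarrow> 0) at_top"
  shows "Limsup at_top (\<lambda>t. ereal (h t * (LBINT \<tau>:{T<..<t}. exp (- integral {\<tau>..t} g) * f \<tau>)))
         \<le> Limsup at_top (\<lambda>t. ereal (h t * f t / g t))"
proof (rule ereal_le_of_scaled_bounds)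
  have "\<forall>\<^sub>F t in at_top. 0 \<le> ereal (h t * f t / g t)"
    using eventually_gt_at_top[of T]
  proof eventually_elim
    case (elim t)
    then show ?case
      using f_nonneg[of t] g_pos[of t] h_pos[of t] by simp
  qed
  then show L_nonneg: "0 \<le> Limsup at_top (\<lambda>t. ereal (h t * f t / g t))"
    by (intro le_Limsup) auto
  fix c \<epsilon> :: real
  assume L_less: "Limsup at_top (\<lambda>t. ereal (h t * f t / g t)) < ereal c" and "0 < \<epsilon>" "\<epsilon> < 1"
  have "\<forall>\<^sub>F t in at_top. T < t \<and> ereal (h t * f t / g t) < ereal c \<and> deriv h t / (h t * g t) < \<epsilon>"
    using eventually_gt_at_top[of T] Limsup_lessD[OF L_less] order_tendstoD(2)[OF lim \<open>0 < \<epsilon>\<close>]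
    by eventually_elim simp
  then obtain N where N: "\<And>t. t \<ge> N \<Longrightarrow> T < t \<and> h t * f t / g t < c \<and> deriv h t / (h t * g t) < \<epsilon>"
    by (auto simp: eventually_at_top_linorder)
  then have bounds: "h t * f t / g t \<le> c" "deriv h t / (h t * g t) \<le> \<epsilon>" if "t \<ge> N" for t
    using that by (auto simp: less_imp_le)
  have "0 \<le> c"
    using order.strict_trans1[OF L_nonneg L_less] by simp
  show "Limsup at_top (\<lambda>t. ereal (h t * (LBINT \<tau>:{T<..<t}. exp (- integral {\<tau>..t} g) * f \<tau>)))
      \<le> ereal (c / (1 - \<epsilon>))"
    by (rule Limsup_le_of_eventual_bounds[OF f_nonneg g_cont g_pos h_pos h_diff y_integrable g_div bounds])
      (use N[of N] \<open>\<epsilon> < 1\<close> \<open>0 \<le> c\<close> in auto)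
qed

end
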